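(* Let $\lambda>0$, $\gamma\ge0$ and $\omega\in[-\pi,\pi]$, and put $\delta=(\sqrt{\gamma^2+1}-1)/\gamma$ (with $\delta=0$ if $\gamma=0$). The Kullback–Leibler divergence $$KL(\mathrm{GCPC}\,\|\,\mathrm{CIPC})=\int_{-\pi}^{\pi}f_{GCPC}(\theta)\log\frac{f_{GCPC}(\theta)}{f_{CIPC}(\theta)}\,d\theta$$ between $\mathrm{GCPC}(\omega,\gamma,\lambda)$ and $\mathrm{CIPC}(\omega,\gamma)$ equals $$-\frac12\log\lambda+2\log\!\left(\frac{\sqrt{\lambda}(1-\delta^2)+1+\delta^2}{2}\right)-\log(1-\delta^2)+E_{WC}\!\left[\log\!\left(\sqrt{\gamma^2+1}-\frac{\gamma\cos\psi}{\sqrt{1+(\lambda-1)\sin^2\psi}}\right)\right],$$ where the expectation is over $\psi\sim\mathrm{WC}(0,\delta)$.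
   Context: For $\lambda>0$, $\gamma\ge0$ and $\omega\in[-\pi,\pi]$, the distribution $\mathrm{GCPC}(\omega,\gamma,\lambda)$ is the distribution on the circle with density $$f_{GCPC}(\theta)=\frac{1}{2\pi\sqrt{\lambda}\,\bigl(b\sqrt{\gamma^2+1}-\gamma\cos\phi\,\sqrt{b}\bigr)},\qquad \phi=\theta-\omega,\quad b=\cos^2\phi+\frac{\sin^2\phi}{\lambda}.$$ The distribution $\mathrm{CIPC}(\omega,\gamma)$ has density $f_{CIPC}(\theta)=\dfrac{1}{2\pi(\sqrt{\gamma^2+1}-\gamma\cos(\theta-\omega))}$. For $0\le\delta<1$, the distribution $\mathrm{WC}(0,\delta)$ has density $\dfrac{1-\delta^2}{2\pi(1+\delta^2-2\delta\cos\psi)}$ on $(-\pi,\pi]$. *)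

theory Defs
  imports "HOL-Analysis.Analysis"
begin

definition f_GCPC :: "real \<Rightarrow> real \<Rightarrow> real \<Rightarrow> real \<Rightarrow> real" where
  "f_GCPC \<omega> \<gamma> lam \<theta> =
     (let \<phi> = \<theta> - \<omega>; b = (cos \<phi>)\<^sup>2 + (sin \<phi>)\<^sup>2 / lam
      in 1 / (2 * pi * sqrt lam * (b * sqrt (\<gamma>\<^sup>2 + 1) - \<gamma> * cos \<phi> * sqrt b)))"

definition f_CIPC :: "real \<Rightarrow> real \<Rightarrow> real \<Rightarrow> real" where
  "f_CIPC \<omega> \<gamma> \<theta> = 1 / (2 * pi * (sqrt (\<gamma>\<^sup>2 + 1) - \<gamma> * cos (\<theta> - \<omega>)))"

definition f_WC :: "real \<Rightarrow> real \<Rightarrow> real" where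
  "f_WC \<delta> \<psi> = (1 - \<delta>\<^sup>2) / (2 * pi * (1 + \<delta>\<^sup>2 - 2 * \<delta> * cos \<psi>))"

definition delta_of :: "real \<Rightarrow> real" where
  "delta_of \<gamma> = (if \<gamma> = 0 then 0 else (sqrt (\<gamma>\<^sup>2 + 1) - 1) / \<gamma>)"

end

(* GCPC(omega, gamma, lam) is the image of CIPC(omega, gamma) under the angle map theta |-> psi with
   tan psi = tan (theta - omega) / sqrt lam, and CIPC(0, gamma) is the wrapped Cauchy law WC(0, delta),
   whose density is the Poisson kernel of the unit disc at delta. Substituting psi turns the divergence
   into the WC(0, delta)-expectation of the log-likelihood ratio written in psi. Besides the constant
   - ln lam / 2 and the term kept in the statement, this ratio contains
     ln (sqrt (gamma^2 + 1) - gamma cos psi) = ln |1 - delta e^(i psi)|^2 - ln (1 - delta^2),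
     ln (1 + (lam - 1) sin^2 psi) = 2 ln ((1 + sqrt lam) / 2) + ln |1 + r e^(2 i psi)|^2,
   with r = (1 - sqrt lam) / (1 + sqrt lam), and by the Poisson formula the WC(0, delta)-expectation of
   ln |1 + a e^(i n psi)|^2 is 2 ln (1 + a delta^n) for |a| < 1. *)
theory Submission
  imports Defs "HOL-Complex_Analysis.Complex_Analysis"
begin

lemma has_integral_periodic_interval:
  fixes f :: "real \<Rightarrow> 'a::banach"
  assumes cont: "continuous_on UNIV f" and per: "\<And>x. f (x + T) = f x"
    and I: "(f has_integral I) {a..a+T}" and "\<bar>a - b\<bar> \<le> T"
  shows "(f has_integral I) {b..b+T}"
proof -
  have int: "f integrable_on {u..v}" for u v
    by (rule integrable_continuous_real) (rule continuous_on_subset[OF cont], simp)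
  have shift: "integral {a..a+T} f = integral {b..b+T} f" if "a \<le> b" "b \<le> a + T" for a b
  proof -
    note combine = Henstock_Kurzweil_Integration.integral_combine[OF _ _ int]
    have "integral {a..a+T} f = integral {a..b} f + integral {b..a+T} f"
      by (rule combine[symmetric]) (use that in auto)
    also have "integral {a..b} f = integral {a+T..b+T} f"
      using integral_shift_real_ivl[where f=f and a="a+T" and b="b+T" and c=T] by (simp add: per)
    also have "integral {a+T..b+T} f + integral {b..a+T} f = integral {b..b+T} f"
      by (subst add.commute, rule combine) (use that in auto)
    finally show ?thesis .
  qed
  have "integral {b..b+T} f = I"
    using integral_unique[OF I] \<open>\<bar>a - b\<bar> \<le> T\<close> shift[of a b] shift[of b a] by argo
  then show ?thesis
    using int by (simp add: has_integral_integrable_integral)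
qed

lemma has_integral_periodic_translate:
  fixes f :: "real \<Rightarrow> 'a::banach"
  assumes "continuous_on UNIV f" and "\<And>x. f (x + T) = f x"
    and "(f has_integral I) {a..a+T}" and "\<bar>c\<bar> \<le> T"
  shows "((\<lambda>x. f (x - c)) has_integral I) {a..a+T}"
proof -
  have "(f has_integral I) {a - c..a - c + T}"
    by (rule has_integral_periodic_interval[OF assms(1-3)]) (use assms(4) in simp)
  from has_integral_shift_real_ivl[OF this, of "-c"] show ?thesis
    by simp
qed

section \<open>The wrapped Cauchy density as a Poisson kernel\<close>

lemma wrapped_Cauchy_denom_pos:
  fixes d t :: real
  assumes "\<bar>d\<bar> < 1"
  shows "1 + d\<^sup>2 - 2 * d * cos t > 0"
proof -
  have "d * cos t \<le> \<bar>d\<bar> * \<bar>cos t\<bar>"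
    by (metis abs_ge_self abs_mult)
  also have "\<dots> \<le> \<bar>d\<bar>"
    by (simp add: mult_left_le)
  finally have "1 + d\<^sup>2 - 2 * d * cos t \<ge> (1 - \<bar>d\<bar>)\<^sup>2"
    by (simp add: power2_eq_square algebra_simps)
  moreover have "(1 - \<bar>d\<bar>)\<^sup>2 > 0" using assms by simp
  ultimately show ?thesis by linarith
qed

lemma continuous_on_f_WC: "\<bar>d\<bar> < 1 \<Longrightarrow> continuous_on UNIV (f_WC d)"
  unfolding f_WC_def using wrapped_Cauchy_denom_pos
  by (intro continuous_intros) (auto simp: less_imp_neq dest: sym)

lemma Poisson_kernel_eq:
  fixes d t :: real
  assumes "\<bar>d\<bar> < 1"
  shows "cis t / (cis t - d) + d * cis t / (1 - d * cis t) = (1 - d\<^sup>2) / (1 + d\<^sup>2 - 2 * d * cos t)"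
proof -
  have "cis t - d \<noteq> 0" "1 - d * cis t \<noteq> 0"
    using assms by (auto simp: right_minus_eq norm_mult dest: arg_cong[where f=cmod])
  then have "cis t / (cis t - d) + d * cis t / (1 - d * cis t)
      = cis t * (1 - d\<^sup>2) / ((cis t - d) * (1 - d * cis t))"
    by (simp add: field_simps) (simp add: algebra_simps power2_eq_square)
  also have "(cis t - d) * (1 - d * cis t) = cis t * (1 + d\<^sup>2 - 2 * d * cos t)"
    by (simp add: complex_eq_iff algebra_simps power2_eq_square cos_double sin_double)
       (simp flip: distrib_left add: sin_cos_squared_add3)
  finally show ?thesis
    by simp
qed

lemma Cauchy_integral_Poisson_kernel:
  fixes F :: "complex \<Rightarrow> complex" and d :: real
  assumes holF: "F holomorphic_on ball 0 R" and "1 < R" and d: "\<bar>d\<bar> < 1"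
  shows "((\<lambda>u. F u / (u - d) + F u * (d / (1 - d * u))) has_contour_integral (2 * of_real pi * \<i> * F d))
           (circlepath 0 1)"
proof -
  define r where "r = min R (2 / (1 + \<bar>d\<bar>))"
  have "1 < r" using \<open>1 < R\<close> d by (simp add: r_def field_simps)
  have "\<bar>d\<bar> * r \<le> \<bar>d\<bar> * (2 / (1 + \<bar>d\<bar>))"
    by (intro mult_left_mono) (auto simp: r_def)
  also have "\<dots> < 1"
    using d by (simp add: field_simps)
  finally have "\<bar>d\<bar> * r < 1" .
  have hol: "F holomorphic_on ball 0 r"
    using holF by (rule holomorphic_on_subset) (simp add: r_def subset_ball)
  have Cauchy_formula: "((\<lambda>u. F u / (u - d)) has_contour_integral (2 * of_real pi * \<i> * F d)) (circlepath 0 1)"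
    using \<open>1 < r\<close> d
    by (intro Cauchy_integral_circlepath_simple holomorphic_on_subset[OF hol]) auto
  have Cauchy_theorem: "((\<lambda>u. F u * (d / (1 - d * u))) has_contour_integral 0) (circlepath 0 1)"
  proof (rule Cauchy_theorem_disc_simple[of _ 0 r])
    have "1 - d * u \<noteq> 0" if "u \<in> ball 0 r" for u :: complex
    proof
      assume "1 - d * u = 0"
      then have "1 = \<bar>d\<bar> * cmod u" by (metis norm_mult norm_of_real norm_one right_minus_eq)
      also have "\<dots> \<le> \<bar>d\<bar> * r" using that by (intro mult_left_mono) auto
      finally show False using \<open>\<bar>d\<bar> * r < 1\<close> by simp
    qed
    then show "(\<lambda>u. F u * (d / (1 - d * u))) holomorphic_on ball 0 r"
      by (intro holomorphic_intros hol)
  qed (use \<open>1 < r\<close> in auto)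
  from has_contour_integral_add[OF Cauchy_formula Cauchy_theorem] show ?thesis
    by simp
qed

text \<open>On the unit circle \<open>u = cis t\<close>, \<open>(1 / (u - d) + d / (1 - d u)) du / (2 \<pi> i) = f_WC d t dt\<close>.\<close>

lemma Poisson_integral_wrapped_Cauchy:
  fixes F :: "complex \<Rightarrow> complex"
  assumes "F holomorphic_on ball 0 R" and "1 < R" and d: "\<bar>d\<bar> < 1"
  shows "((\<lambda>t. f_WC d t * F (cis t)) has_integral F d) {0..2*pi}"
proof -
  have "((\<lambda>t. (F (cis t) / (cis t - d) + F (cis t) * (d / (1 - d * cis t))) * \<i> * cis t)
      has_integral (2 * of_real pi * \<i> * F d)) {0..2*pi}"
    using Cauchy_integral_Poisson_kernel[OF assms] unfolding circlepath_def
    by (subst (asm) has_contour_integral_part_circlepath_iff) auto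
  from has_integral_divide[OF this, of "2 * of_real pi * \<i>"]
  have "((\<lambda>t. (F (cis t) / (cis t - d) + F (cis t) * (d / (1 - d * cis t))) * \<i> * cis t / (2 * of_real pi * \<i>))
      has_integral F d) {0..2*pi}"
    by simp
  moreover have "(F (cis t) / (cis t - d) + F (cis t) * (d / (1 - d * cis t))) * \<i> * cis t / (2 * of_real pi * \<i>)
      = f_WC d t * F (cis t)" for t
  proof -
    have "(F (cis t) / (cis t - d) + F (cis t) * (d / (1 - d * cis t))) * \<i> * cis t / (2 * of_real pi * \<i>)
        = (F (cis t) / (cis t - d) + F (cis t) * (d / (1 - d * cis t))) * cis t / (2 * of_real pi)"
      by simp
    also have "\<dots> = F (cis t) * (cis t / (cis t - d) + d * cis t / (1 - d * cis t)) / (2 * of_real pi)"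
      by (simp add: algebra_simps)
    also have "\<dots> = f_WC d t * F (cis t)"
      unfolding Poisson_kernel_eq[OF d] f_WC_def by (simp add: ac_simps)
    finally show ?thesis .
  qed
  ultimately show ?thesis
    by (rule has_integral_eq[rotated])
qed

lemma wrapped_Cauchy_expectation_Re:
  fixes F :: "complex \<Rightarrow> complex"
  assumes holF: "F holomorphic_on ball 0 R" and "1 < R" and d: "\<bar>d\<bar> < 1"
  shows "((\<lambda>t. f_WC d t * Re (F (cis t))) has_integral Re (F d)) {-pi..pi}"
proof -
  let ?g = "\<lambda>t. f_WC d t * Re (F (cis t))"
  have "(?g has_integral Re (F d)) {0..2*pi}"
    using has_integral_linear[OF Poisson_integral_wrapped_Cauchy[OF assms] bounded_linear_Re]
    by (simp add: o_def)
  moreover have "continuous_on UNIV ?g"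
  proof -
    have "continuous_on UNIV (\<lambda>t. F (cis t))"
      using \<open>1 < R\<close>
      by (intro continuous_on_compose2[OF holomorphic_on_imp_continuous_on[OF holF]] continuous_intros) auto
    then show ?thesis
      using continuous_on_f_WC[OF d] by (intro continuous_intros)
  qed
  moreover have "?g (t + 2*pi) = ?g t" for t
    by (simp add: f_WC_def flip: cis_mult)
  ultimately show ?thesis
    using has_integral_periodic_interval[of ?g "2*pi" "Re (F d)" 0 "-pi"] by simp
qed

lemma wrapped_Cauchy_total_mass:
  assumes "\<bar>d\<bar> < 1"
  shows "(f_WC d has_integral 1) {-pi..pi}"
  using wrapped_Cauchy_expectation_Re[of "\<lambda>_. 1" 2 d] assms by simp

lemma cmod_one_plus_cis_power2:
  fixes c u :: real
  shows "(cmod (1 + c * cis u))\<^sup>2 = 1 + 2 * c * cos u + c\<^sup>2"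
proof -
  have "(cmod (1 + c * cis u))\<^sup>2 = (1 + c * cos u)\<^sup>2 + (c * sin u)\<^sup>2"
    by (simp add: cmod_power2)
  also have "\<dots> = 1 + 2 * c * cos u + c\<^sup>2 * ((cos u)\<^sup>2 + (sin u)\<^sup>2)"
    by algebra
  finally show ?thesis
    by simp
qed

lemma wrapped_Cauchy_expectation_ln:
  fixes r d :: real and n :: nat
  assumes r: "\<bar>r\<bar> < 1" and d: "\<bar>d\<bar> < 1" and "n > 0"
  shows "((\<lambda>t. f_WC d t * ln (1 + 2 * r * cos (real n * t) + r\<^sup>2)) has_integral 2 * ln (1 + r * d ^ n)) {-pi..pi}"
proof -
  define R where "R = root n (2 / (1 + \<bar>r\<bar>))"
  have "1 < R"
    using r \<open>n > 0\<close> by (simp add: R_def field_simps)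
  have "\<bar>r\<bar> * R ^ n < 1"
    using r \<open>n > 0\<close> by (simp add: R_def field_simps)
  have Re_pos: "Re (1 + r * w ^ n) > 0" if "cmod w < R" for w :: complex
  proof -
    have "- Re (r * w ^ n) \<le> \<bar>r\<bar> * cmod w ^ n"
      using abs_Re_le_cmod[of "r * w ^ n"] by (simp add: norm_mult norm_power)
    also have "\<dots> \<le> \<bar>r\<bar> * R ^ n"
      using that by (intro mult_left_mono power_mono) auto
    finally show ?thesis
      using \<open>\<bar>r\<bar> * R ^ n < 1\<close> by simp
  qed
  define F where "F w = 2 * Ln (1 + r * w ^ n)" for w :: complex
  have "F holomorphic_on ball 0 R"
    unfolding F_def by (intro holomorphic_intros) (force simp: complex_nonpos_Reals_iff dest: Re_pos)
  from wrapped_Cauchy_expectation_Re[OF this \<open>1 < R\<close> d]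
  have "((\<lambda>t. f_WC d t * Re (F (cis t))) has_integral Re (F d)) {-pi..pi}" .
  moreover have "Re (F (cis t)) = ln (1 + 2 * r * cos (real n * t) + r\<^sup>2)" for t
  proof -
    have "Re (1 + r * cis t ^ n) > 0"
      using Re_pos[of "cis t"] \<open>1 < R\<close> by simp
    then have "1 + r * cis t ^ n \<noteq> 0"
      by force
    then have "Re (F (cis t)) = ln ((cmod (1 + r * cis (real n * t)))\<^sup>2)"
      by (simp add: F_def Complex.DeMoivre ln_realpow)
    then show ?thesis
      by (simp add: cmod_one_plus_cis_power2)
  qed
  moreover have "Re (F d) = 2 * ln (1 + r * d ^ n)"
  proof -
    have "\<bar>r * d ^ n\<bar> = \<bar>r\<bar> * \<bar>d\<bar> ^ n"
      by (simp add: abs_mult power_abs)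
    also have "\<dots> \<le> \<bar>r\<bar>"
      using d by (simp add: mult_left_le power_le_one)
    also have "\<dots> < 1"
      by (fact r)
    finally have "1 + r * d ^ n > 0"
      by linarith
    moreover have "F d = 2 * Ln (of_real (1 + r * d ^ n))"
      by (simp add: F_def)
    ultimately show ?thesis
      by (simp only: Ln_of_real) simp
  qed
  ultimately show ?thesis
    by simp
qed

section \<open>CIPC as a wrapped Cauchy distribution\<close>

lemma abs_less_sqrt_power2_plus_one: "\<bar>x\<bar> < sqrt (x\<^sup>2 + 1)"
  using real_sqrt_less_mono[of "x\<^sup>2" "x\<^sup>2 + 1"] by simp

lemma delta_of_eq: "delta_of \<gamma> = \<gamma> / (sqrt (\<gamma>\<^sup>2 + 1) + 1)"
proof (cases "\<gamma> = 0")
  case False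
  have "sqrt (\<gamma>\<^sup>2 + 1) + 1 \<noteq> 0"
    using abs_less_sqrt_power2_plus_one[of \<gamma>] by linarith
  moreover have "(sqrt (\<gamma>\<^sup>2 + 1) - 1) * (sqrt (\<gamma>\<^sup>2 + 1) + 1) = \<gamma> * \<gamma>"
    by (simp add: algebra_simps power2_eq_square)
  ultimately show ?thesis
    using False by (simp add: delta_of_def frac_eq_eq)
qed (simp add: delta_of_def)

lemma abs_delta_of_less_one: "\<bar>delta_of \<gamma>\<bar> < 1"
proof -
  have "\<bar>\<gamma>\<bar> < sqrt (\<gamma>\<^sup>2 + 1) + 1"
    using abs_less_sqrt_power2_plus_one[of \<gamma>] by linarith
  then show ?thesis
    by (simp add: delta_of_eq abs_divide)
qed

lemma CIPC_denom_eq_wrapped_Cauchy_denom: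
  fixes \<gamma> t :: real
  defines "\<delta> \<equiv> delta_of \<gamma>"
  shows "sqrt (\<gamma>\<^sup>2 + 1) - \<gamma> * cos t = (1 + \<delta>\<^sup>2 - 2 * \<delta> * cos t) / (1 - \<delta>\<^sup>2)"
proof -
  define S where "S = sqrt (\<gamma>\<^sup>2 + 1)"
  have "S + 1 > 0"
    using abs_less_sqrt_power2_plus_one[of \<gamma>] by (simp add: S_def)
  then have \<gamma>: "\<gamma> = \<delta> * (S + 1)"
    by (simp add: \<delta>_def delta_of_eq S_def)
  have "S\<^sup>2 = \<gamma>\<^sup>2 + 1"
    by (simp add: S_def)
  then have "(S - 1) * (S + 1) = (\<delta>\<^sup>2 * (S + 1)) * (S + 1)"
    using \<gamma> by algebra
  then have S: "S - 1 = \<delta>\<^sup>2 * (S + 1)"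
    using \<open>S + 1 > 0\<close> by simp
  have "(S - \<gamma> * cos t) * (1 - \<delta>\<^sup>2) = 1 + \<delta>\<^sup>2 - 2 * \<delta> * cos t"
    using \<gamma> S by algebra
  moreover have "\<delta>\<^sup>2 < 1"
    using abs_delta_of_less_one[of \<gamma>] by (simp add: \<delta>_def abs_square_less_1)
  ultimately show ?thesis
    by (simp add: S_def eq_divide_eq)
qed

lemma CIPC_denom_pos:
  fixes \<gamma> c :: real
  assumes "\<bar>c\<bar> \<le> 1"
  shows "0 < sqrt (\<gamma>\<^sup>2 + 1) - \<gamma> * c"
proof -
  have "\<gamma> * c \<le> \<bar>\<gamma>\<bar> * \<bar>c\<bar>"
    by (metis abs_ge_self abs_mult)
  also have "\<dots> \<le> \<bar>\<gamma>\<bar>"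
    using assms by (simp add: mult_left_le)
  also have "\<dots> < sqrt (\<gamma>\<^sup>2 + 1)"
    by (fact abs_less_sqrt_power2_plus_one)
  finally show ?thesis
    by simp
qed

lemma f_CIPC_pos: "0 < f_CIPC \<omega> \<gamma> \<theta>"
  using CIPC_denom_pos[of "cos (\<theta> - \<omega>)" \<gamma>] by (simp add: f_CIPC_def)

lemma f_CIPC_eq_f_WC: "f_CIPC \<omega> \<gamma> \<theta> = f_WC (delta_of \<gamma>) (\<theta> - \<omega>)"
proof -
  have "(delta_of \<gamma>)\<^sup>2 < 1"
    using abs_delta_of_less_one[of \<gamma>] by (simp add: abs_square_less_1)
  then show ?thesis
    unfolding f_CIPC_def f_WC_def CIPC_denom_eq_wrapped_Cauchy_denom by simp
qed

lemma continuous_on_f_CIPC: "continuous_on UNIV (f_CIPC \<omega> \<gamma>)"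
  unfolding f_CIPC_eq_f_WC[abs_def]
  using abs_delta_of_less_one
  by (intro continuous_on_compose2[OF continuous_on_f_WC] continuous_intros) auto

lemma wrapped_Cauchy_expectation_ln_CIPC_denom:
  fixes \<gamma> :: real
  defines "\<delta> \<equiv> delta_of \<gamma>"
  shows "((\<lambda>t. f_WC \<delta> t * ln (sqrt (\<gamma>\<^sup>2 + 1) - \<gamma> * cos t)) has_integral ln (1 - \<delta>\<^sup>2)) {-pi..pi}"
proof -
  have "\<bar>\<delta>\<bar> < 1" "\<bar>-\<delta>\<bar> < 1"
    using abs_delta_of_less_one[of \<gamma>] by (simp_all add: \<delta>_def)
  then have "\<delta>\<^sup>2 < 1"
    by (simp add: abs_square_less_1)
  have "((\<lambda>t. f_WC \<delta> t * ln (1 + 2 * (-\<delta>) * cos (real 1 * t) + (-\<delta>)\<^sup>2) - f_WC \<delta> t * ln (1 - \<delta>\<^sup>2))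
      has_integral 2 * ln (1 + (-\<delta>) * \<delta> ^ 1) - 1 * ln (1 - \<delta>\<^sup>2)) {-pi..pi}"
    using \<open>\<bar>\<delta>\<bar> < 1\<close> \<open>\<bar>-\<delta>\<bar> < 1\<close>
    by (intro has_integral_diff wrapped_Cauchy_expectation_ln has_integral_mult_left wrapped_Cauchy_total_mass) auto
  moreover have "ln (1 + 2 * (-\<delta>) * cos (real 1 * t) + (-\<delta>)\<^sup>2) - ln (1 - \<delta>\<^sup>2)
      = ln (sqrt (\<gamma>\<^sup>2 + 1) - \<gamma> * cos t)" for t
    using wrapped_Cauchy_denom_pos[OF \<open>\<bar>\<delta>\<bar> < 1\<close>, of t] \<open>\<delta>\<^sup>2 < 1\<close>
    by (simp add: \<delta>_def CIPC_denom_eq_wrapped_Cauchy_denom ln_div)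
  ultimately show ?thesis
    by (simp add: right_diff_distrib[symmetric] power2_eq_square)
qed

lemma cos_power2_plus_sin_power2_div_pos:
  fixes s x :: real
  assumes "s > 0"
  shows "(cos x)\<^sup>2 + (sin x)\<^sup>2 / s > 0"
proof (cases "cos x = 0")
  case True
  then have "(sin x)\<^sup>2 = 1"
    using sin_cos_squared_add[of x] by simp
  with True assms show ?thesis
    by simp
qed (use assms in \<open>simp add: add_pos_nonneg\<close>)

lemma stretch_factor_pos:
  fixes lam t :: real
  assumes "lam > 0"
  shows "0 < 1 + (lam - 1) * (sin t)\<^sup>2"
proof -
  have "1 + (lam - 1) * (sin t)\<^sup>2 = (cos t)\<^sup>2 + lam * (sin t)\<^sup>2"
    using sin_cos_squared_add[of t] by algebra
  also have "\<dots> > 0"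
    using cos_power2_plus_sin_power2_div_pos[of "1 / lam" t] assms by (simp add: mult.commute)
  finally show ?thesis .
qed

lemma abs_cos_le_sqrt_stretch_factor:
  fixes lam t :: real
  assumes "lam > 0"
  shows "\<bar>cos t\<bar> \<le> sqrt (1 + (lam - 1) * (sin t)\<^sup>2)"
proof -
  have "(cos t)\<^sup>2 \<le> 1 + (lam - 1) * (sin t)\<^sup>2"
    using sin_cos_squared_add[of t] assms by (simp add: algebra_simps)
  then show ?thesis
    using real_sqrt_le_mono by fastforce
qed

lemma stretched_CIPC_denom_pos:
  fixes lam \<gamma> \<psi> :: real
  assumes "lam > 0"
  shows "0 < sqrt (\<gamma>\<^sup>2 + 1) - \<gamma> * cos \<psi> / sqrt (1 + (lam - 1) * (sin \<psi>)\<^sup>2)"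
proof -
  have "\<bar>cos \<psi> / sqrt (1 + (lam - 1) * (sin \<psi>)\<^sup>2)\<bar> \<le> 1"
    using abs_cos_le_sqrt_stretch_factor[OF assms, of \<psi>] stretch_factor_pos[OF assms, of \<psi>]
    by (auto simp: abs_divide divide_le_eq_1)
  from CIPC_denom_pos[OF this, of \<gamma>] show ?thesis
    by simp
qed

lemma continuous_on_ln_stretched_CIPC_denom:
  assumes "lam > 0"
  shows "continuous_on UNIV (\<lambda>\<psi>. ln (sqrt (\<gamma>\<^sup>2 + 1) - \<gamma> * cos \<psi> / sqrt (1 + (lam - 1) * (sin \<psi>)\<^sup>2)))"
proof (intro continuous_on_ln ballI)
  have "sqrt (1 + (lam - 1) * (sin \<psi>)\<^sup>2) \<noteq> 0" for \<psi>
    using stretch_factor_pos[OF assms, of \<psi>] by simp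
  then show "continuous_on UNIV (\<lambda>\<psi>. sqrt (\<gamma>\<^sup>2 + 1) - \<gamma> * cos \<psi> / sqrt (1 + (lam - 1) * (sin \<psi>)\<^sup>2))"
    by (intro continuous_intros) auto
  show "sqrt (\<gamma>\<^sup>2 + 1) - \<gamma> * cos \<psi> / sqrt (1 + (lam - 1) * (sin \<psi>)\<^sup>2) \<noteq> 0" for \<psi>
    using stretched_CIPC_denom_pos[OF assms, of \<gamma> \<psi>] by simp
qed

lemma wrapped_Cauchy_expectation_ln_stretch_factor:
  fixes lam d :: real
  assumes "lam > 0" and d: "\<bar>d\<bar> < 1"
  shows "((\<lambda>t. f_WC d t * ln (1 + (lam - 1) * (sin t)\<^sup>2))
           has_integral 2 * ln ((sqrt lam * (1 - d\<^sup>2) + 1 + d\<^sup>2) / 2)) {-pi..pi}"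
proof -
  define s where "s = sqrt lam"
  define r where "r = (1 - s) / (1 + s)"
  have "s > 0" "lam = s\<^sup>2"
    using \<open>lam > 0\<close> by (simp_all add: s_def)
  have "\<bar>r\<bar> < 1" "(1 + s) * r = 1 - s"
    using \<open>s > 0\<close> by (simp_all add: r_def abs_less_iff field_simps)
  have pos: "1 + 2 * r * cos (real 2 * t) + r\<^sup>2 > 0" for t
    using wrapped_Cauchy_denom_pos[of "-r" "real 2 * t"] \<open>\<bar>r\<bar> < 1\<close> by simp
  have factor: "1 + (lam - 1) * (sin t)\<^sup>2 = ((1 + s) / 2)\<^sup>2 * (1 + 2 * r * cos (real 2 * t) + r\<^sup>2)" for t
  proof -
    have "4 * (1 + (lam - 1) * (sin t)\<^sup>2) = (1 + s)\<^sup>2 * (1 + 2 * r * cos (2 * t) + r\<^sup>2)"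
      unfolding cos_double_sin using \<open>(1 + s) * r = 1 - s\<close> \<open>lam = s\<^sup>2\<close> by algebra
    then show ?thesis
      by (simp add: power_divide)
  qed
  have ln_eq: "ln (1 + (lam - 1) * (sin t)\<^sup>2)
      = 2 * ln ((1 + s) / 2) + ln (1 + 2 * r * cos (real 2 * t) + r\<^sup>2)" for t
    using \<open>s > 0\<close> pos[of t] by (simp only: factor ln_mult ln_realpow) simp_all
  have "((\<lambda>t. f_WC d t * (2 * ln ((1 + s) / 2)) + f_WC d t * ln (1 + 2 * r * cos (real 2 * t) + r\<^sup>2))
      has_integral 1 * (2 * ln ((1 + s) / 2)) + 2 * ln (1 + r * d ^ 2)) {-pi..pi}"
    using d \<open>\<bar>r\<bar> < 1\<close>
    by (intro has_integral_add has_integral_mult_left wrapped_Cauchy_total_mass wrapped_Cauchy_expectation_ln) auto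
  moreover have "1 * (2 * ln ((1 + s) / 2)) + 2 * ln (1 + r * d ^ 2)
      = 2 * ln ((sqrt lam * (1 - d\<^sup>2) + 1 + d\<^sup>2) / 2)"
  proof -
    have "\<bar>r * d\<^sup>2\<bar> \<le> \<bar>r\<bar>"
      using d by (simp add: abs_mult mult_left_le abs_square_le_1)
    then have "1 + r * d\<^sup>2 > 0"
      using \<open>\<bar>r\<bar> < 1\<close> by linarith
    with \<open>s > 0\<close> have "ln ((1 + s) / 2) + ln (1 + r * d\<^sup>2) = ln ((1 + s) / 2 * (1 + r * d\<^sup>2))"
      by (intro ln_mult_pos[symmetric]) auto
    also have "(1 + s) / 2 * (1 + r * d\<^sup>2) = (sqrt lam * (1 - d\<^sup>2) + 1 + d\<^sup>2) / 2"
      using \<open>(1 + s) * r = 1 - s\<close> unfolding s_def by algebra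
    finally show ?thesis
      by simp
  qed
  moreover have "f_WC d t * (2 * ln ((1 + s) / 2)) + f_WC d t * ln (1 + 2 * r * cos (real 2 * t) + r\<^sup>2)
      = f_WC d t * ln (1 + (lam - 1) * (sin t)\<^sup>2)" for t
    by (simp only: ln_eq distrib_left)
  ultimately show ?thesis
    by simp
qed

section \<open>The stretched angle\<close>

text \<open>The continuous branch of \<open>arctan (tan x / s)\<close>: by the subtraction formula for \<open>tan\<close>,
  the arctan term is the angle from \<open>x\<close> to that branch, and its denominator never vanishes.\<close>

definition stretch_angle :: "real \<Rightarrow> real \<Rightarrow> real" where
  "stretch_angle s x = x + arctan ((1/s - 1) * sin x * cos x / ((cos x)\<^sup>2 + (sin x)\<^sup>2 / s))"

lemma stretch_angle_has_real_derivative: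
  fixes s x :: real
  assumes "s > 0"
  shows "(stretch_angle s has_real_derivative 1 / (s * ((cos x)\<^sup>2 + (sin x)\<^sup>2 / s\<^sup>2))) (at x)"
proof -
  define N where "N = (1/s - 1) * sin x * cos x"
  define D where "D = (cos x)\<^sup>2 + (sin x)\<^sup>2 / s"
  define N' where "N' = (1/s - 1) * ((cos x)\<^sup>2 - (sin x)\<^sup>2)"
  define D' where "D' = 2 * (1/s - 1) * sin x * cos x"
  define b where "b = (cos x)\<^sup>2 + (sin x)\<^sup>2 / s\<^sup>2"
  have "D > 0"
    using cos_power2_plus_sin_power2_div_pos[OF \<open>s > 0\<close>] by (simp add: D_def)
  have "b > 0"
    using cos_power2_plus_sin_power2_div_pos[of "s\<^sup>2" x] \<open>s > 0\<close> by (simp add: b_def)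
  have dN: "((\<lambda>x. (1/s - 1) * sin x * cos x) has_real_derivative N') (at x)"
    unfolding N'_def by (rule derivative_eq_intros refl)+ (simp add: power2_eq_square algebra_simps)
  have dD: "((\<lambda>x. (cos x)\<^sup>2 + (sin x)\<^sup>2 / s) has_real_derivative D') (at x)"
    unfolding D'_def using \<open>s > 0\<close> by (auto intro!: derivative_eq_intros simp: power2_eq_square field_simps)
  have "(stretch_angle s has_real_derivative 1 + inverse (1 + (N / D)\<^sup>2) * ((N' * D - N * D') / (D * D))) (at x)"
    unfolding stretch_angle_def[abs_def] N_def D_def
    using \<open>D > 0\<close> by (intro DERIV_add DERIV_ident DERIV_chain2[OF DERIV_arctan] DERIV_divide dN dD) (simp add: D_def)
  moreover have "1 + inverse (1 + (N / D)\<^sup>2) * ((N' * D - N * D') / (D * D)) = 1 / (s * b)"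
  proof -
    have cs: "(cos x)\<^sup>2 + (sin x)\<^sup>2 = 1"
      by simp
    have "1 + (N / D)\<^sup>2 = (D\<^sup>2 + N\<^sup>2) / (D * D)"
      using \<open>D > 0\<close> by (simp add: field_simps power2_eq_square)
    moreover have "D\<^sup>2 + N\<^sup>2 = b"
      unfolding D_def N_def b_def using \<open>s > 0\<close> by (simp add: field_simps power2_eq_square) (use cs in algebra)
    moreover have "N' * D - N * D' = 1/s - b"
      unfolding D_def N_def N'_def D'_def b_def using \<open>s > 0\<close>
      by (simp add: field_simps power2_eq_square) (use cs in algebra)
    ultimately have "1 + inverse (1 + (N / D)\<^sup>2) * ((N' * D - N * D') / (D * D)) = 1 + (1/s - b) / b"
      using \<open>D > 0\<close> by simp
    also have "\<dots> = 1 / (s * b)"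
      using \<open>b > 0\<close> \<open>s > 0\<close> by (simp add: field_simps)
    finally show ?thesis .
  qed
  ultimately show ?thesis
    by (simp add: b_def)
qed

lemma continuous_on_stretch_angle: "s > 0 \<Longrightarrow> continuous_on UNIV (stretch_angle s)"
  using stretch_angle_has_real_derivative
  by (intro continuous_at_imp_continuous_on ballI DERIV_isCont) blast

lemma cos_sin_stretch_angle:
  fixes s x :: real
  assumes "s > 0"
  defines "b \<equiv> (cos x)\<^sup>2 + (sin x)\<^sup>2 / s\<^sup>2"
  shows "cos (stretch_angle s x) = cos x / sqrt b" and "sin (stretch_angle s x) = sin x / (s * sqrt b)"
proof -
  define N where "N = (1/s - 1) * sin x * cos x"
  define D where "D = (cos x)\<^sup>2 + (sin x)\<^sup>2 / s"
  have "D > 0"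
    using cos_power2_plus_sin_power2_div_pos[OF \<open>s > 0\<close>] by (simp add: D_def)
  have cs: "(cos x)\<^sup>2 + (sin x)\<^sup>2 = 1"
    by simp
  have "D\<^sup>2 + N\<^sup>2 = b"
    unfolding D_def N_def b_def using \<open>s > 0\<close> by (simp add: field_simps power2_eq_square) (use cs in algebra)
  then have sqrt_eq: "sqrt (1 + (N / D)\<^sup>2) = sqrt b / D"
    using \<open>D > 0\<close> by (simp add: field_simps real_sqrt_divide)
  have "sqrt b > 0"
    using cos_power2_plus_sin_power2_div_pos[of "s\<^sup>2" x] \<open>s > 0\<close> by (simp add: b_def)
  have angle: "stretch_angle s x = x + arctan (N / D)"
    by (simp add: stretch_angle_def N_def D_def)
  have "cos (stretch_angle s x) = (cos x * D - sin x * N) / sqrt b"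
    unfolding angle cos_add cos_arctan sin_arctan sqrt_eq using \<open>D > 0\<close> \<open>sqrt b > 0\<close> by (simp add: field_simps)
  also have "cos x * D - sin x * N = cos x"
    unfolding D_def N_def using \<open>s > 0\<close> by (simp add: field_simps power2_eq_square) (use cs in algebra)
  finally show "cos (stretch_angle s x) = cos x / sqrt b" .
  have "sin (stretch_angle s x) = (sin x * D + cos x * N) / sqrt b"
    unfolding angle sin_add cos_arctan sin_arctan sqrt_eq using \<open>D > 0\<close> \<open>sqrt b > 0\<close> by (simp add: field_simps)
  also have "sin x * D + cos x * N = sin x / s"
    unfolding D_def N_def using \<open>s > 0\<close> by (simp add: field_simps power2_eq_square) (use cs in algebra)
  finally show "sin (stretch_angle s x) = sin x / (s * sqrt b)"
    by simp
qed

lemma stretch_factor_stretch_angle: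
  fixes s x :: real
  assumes "s > 0"
  shows "1 + (s\<^sup>2 - 1) * (sin (stretch_angle s x))\<^sup>2 = 1 / ((cos x)\<^sup>2 + (sin x)\<^sup>2 / s\<^sup>2)"
proof -
  define b where "b = (cos x)\<^sup>2 + (sin x)\<^sup>2 / s\<^sup>2"
  have "b > 0"
    using cos_power2_plus_sin_power2_div_pos[of "s\<^sup>2" x] \<open>s > 0\<close> by (simp add: b_def)
  have sin2: "(sin (stretch_angle s x))\<^sup>2 = (sin x)\<^sup>2 / (s\<^sup>2 * b)"
    using cos_sin_stretch_angle(2)[OF \<open>s > 0\<close>, of x] \<open>b > 0\<close>
    by (simp add: b_def power_divide power_mult_distrib)
  have "s\<^sup>2 * b = s\<^sup>2 * (cos x)\<^sup>2 + (sin x)\<^sup>2"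
    using \<open>s > 0\<close> by (simp add: b_def field_simps)
  then have key: "s\<^sup>2 * b + (s\<^sup>2 - 1) * (sin x)\<^sup>2 = s\<^sup>2"
    using sin_cos_squared_add[of x] by algebra
  have "1 + (s\<^sup>2 - 1) * (sin (stretch_angle s x))\<^sup>2 = (s\<^sup>2 * b + (s\<^sup>2 - 1) * (sin x)\<^sup>2) / (s\<^sup>2 * b)"
    unfolding sin2 using \<open>s > 0\<close> \<open>b > 0\<close> by (simp add: field_simps)
  also have "\<dots> = 1 / b"
    unfolding key using \<open>s > 0\<close> by simp
  finally show ?thesis
    by (simp add: b_def)
qed

lemma strict_mono_stretch_angle:
  assumes "s > 0"
  shows "strict_mono (stretch_angle s)"
proof (rule strict_monoI)
  fix x y :: real
  assume "x < y"
  show "stretch_angle s x < stretch_angle s y"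
  proof (rule DERIV_pos_imp_increasing[OF \<open>x < y\<close>])
    fix t :: real
    have "(cos t)\<^sup>2 + (sin t)\<^sup>2 / s\<^sup>2 > 0"
      using cos_power2_plus_sin_power2_div_pos[of "s\<^sup>2" t] assms by simp
    then show "\<exists>d. DERIV (stretch_angle s) t :> d \<and> d > 0"
      using stretch_angle_has_real_derivative[OF assms, of t] assms by auto
  qed
qed

lemma stretch_angle_pi: "stretch_angle s pi = pi" "stretch_angle s (-pi) = -pi"
  by (simp_all add: stretch_angle_def)

lemma has_integral_stretch_angle_substitution:
  fixes G :: "real \<Rightarrow> 'a::euclidean_space"
  assumes "s > 0" and "continuous_on {-pi..pi} G"
  shows "((\<lambda>x. (1 / (s * ((cos x)\<^sup>2 + (sin x)\<^sup>2 / s\<^sup>2))) *\<^sub>R G (stretch_angle s x))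
           has_integral integral {-pi..pi} G) {-pi..pi}"
proof -
  have mono: "stretch_angle s u \<le> stretch_angle s v \<longleftrightarrow> u \<le> v" for u v
    using strict_mono_less_eq[OF strict_mono_stretch_angle[OF \<open>s > 0\<close>]] .
  have "stretch_angle s ` {-pi..pi} \<subseteq> {-pi..pi}"
    using mono[of "-pi"] mono[of _ pi] by (auto simp: stretch_angle_pi)
  then show ?thesis
    using has_integral_substitution[where a="-pi" and b=pi and g="stretch_angle s" and c="-pi" and d=pi and f=G]
      assms stretch_angle_has_real_derivative[OF \<open>s > 0\<close>]
    by (simp add: stretch_angle_pi has_field_derivative_at_within)
qed

section \<open>GCPC as the image of CIPC under the stretched angle\<close>

lemma f_GCPC_shift: "f_GCPC \<omega> \<gamma> lam \<theta> = f_GCPC 0 \<gamma> lam (\<theta> - \<omega>)"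
  by (simp add: f_GCPC_def)

lemma f_GCPC_pushforward:
  fixes lam \<gamma> \<phi> :: real
  assumes "lam > 0"
  defines "b \<equiv> (cos \<phi>)\<^sup>2 + (sin \<phi>)\<^sup>2 / lam"
  shows "f_GCPC 0 \<gamma> lam \<phi> = 1 / (sqrt lam * b) * f_CIPC 0 \<gamma> (stretch_angle (sqrt lam) \<phi>)"
proof -
  have "b > 0"
    using cos_power2_plus_sin_power2_div_pos[OF \<open>lam > 0\<close>] by (simp add: b_def)
  have "cos (stretch_angle (sqrt lam) \<phi>) = cos \<phi> / sqrt b"
    using cos_sin_stretch_angle(1)[of "sqrt lam" \<phi>] \<open>lam > 0\<close> by (simp add: b_def)
  then have "cos \<phi> = sqrt b * cos (stretch_angle (sqrt lam) \<phi>)"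
    using \<open>b > 0\<close> by (simp add: field_simps)
  then have "cos \<phi> * sqrt b = (sqrt b * sqrt b) * cos (stretch_angle (sqrt lam) \<phi>)"
    by (simp add: mult_ac)
  also have "sqrt b * sqrt b = b"
    using \<open>b > 0\<close> by simp
  finally have denom: "b * sqrt (\<gamma>\<^sup>2 + 1) - \<gamma> * cos \<phi> * sqrt b
      = b * (sqrt (\<gamma>\<^sup>2 + 1) - \<gamma> * cos (stretch_angle (sqrt lam) \<phi>))"
    by (simp add: algebra_simps)
  have "f_GCPC 0 \<gamma> lam \<phi> = 1 / (2 * pi * sqrt lam * (b * sqrt (\<gamma>\<^sup>2 + 1) - \<gamma> * cos \<phi> * sqrt b))"
    by (simp add: f_GCPC_def Let_def b_def)
  also have "\<dots> = 1 / (sqrt lam * b) * f_CIPC 0 \<gamma> (stretch_angle (sqrt lam) \<phi>)"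
    unfolding denom by (simp add: f_CIPC_def)
  finally show ?thesis .
qed

lemma f_GCPC_pos:
  assumes "lam > 0"
  shows "0 < f_GCPC \<omega> \<gamma> lam \<theta>"
  using cos_power2_plus_sin_power2_div_pos[OF assms, of "\<theta> - \<omega>"] f_CIPC_pos assms
  by (simp add: f_GCPC_shift[of \<omega>] f_GCPC_pushforward)

lemma continuous_on_f_GCPC:
  assumes "lam > 0"
  shows "continuous_on UNIV (f_GCPC \<omega> \<gamma> lam)"
proof -
  have "continuous_on UNIV (\<lambda>\<phi>. f_CIPC 0 \<gamma> (stretch_angle (sqrt lam) \<phi>))"
    using assms by (intro continuous_on_compose2[OF continuous_on_f_CIPC continuous_on_stretch_angle]) auto
  then have "continuous_on UNIV (f_GCPC 0 \<gamma> lam)"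
    unfolding f_GCPC_pushforward[OF assms, abs_def]
    using assms cos_power2_plus_sin_power2_div_pos[OF assms]
    by (intro continuous_intros) (auto simp: less_imp_neq[symmetric])
  then show ?thesis
    unfolding f_GCPC_shift[of \<omega>, abs_def]
    by (rule continuous_on_compose2) (auto intro: continuous_intros)
qed

text \<open>The log-likelihood ratio \<open>ln (f_GCPC / f_CIPC)\<close> (for \<open>\<omega> = 0\<close>), written in the coordinate
  \<open>\<psi> = stretch_angle (sqrt lam) \<theta>\<close>.\<close>

definition GCPC_log_ratio :: "real \<Rightarrow> real \<Rightarrow> real \<Rightarrow> real" where
  "GCPC_log_ratio lam \<gamma> \<psi> =
     - ln lam / 2 + ln (1 + (lam - 1) * (sin \<psi>)\<^sup>2) - ln (sqrt (\<gamma>\<^sup>2 + 1) - \<gamma> * cos \<psi>)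
     + ln (sqrt (\<gamma>\<^sup>2 + 1) - \<gamma> * cos \<psi> / sqrt (1 + (lam - 1) * (sin \<psi>)\<^sup>2))"

lemma ln_GCPC_CIPC_ratio:
  fixes lam \<gamma> \<phi> :: real
  assumes "lam > 0"
  shows "ln (f_GCPC 0 \<gamma> lam \<phi> / f_CIPC 0 \<gamma> \<phi>) = GCPC_log_ratio lam \<gamma> (stretch_angle (sqrt lam) \<phi>)"
proof -
  define \<psi> where "\<psi> = stretch_angle (sqrt lam) \<phi>"
  define q where "q = 1 + (lam - 1) * (sin \<psi>)\<^sup>2"
  define b where "b = (cos \<phi>)\<^sup>2 + (sin \<phi>)\<^sup>2 / lam"
  define S where "S = sqrt (\<gamma>\<^sup>2 + 1)"
  have "q > 0"
    using stretch_factor_pos[OF \<open>lam > 0\<close>] by (simp add: q_def)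
  have "b > 0"
    using cos_power2_plus_sin_power2_div_pos[OF \<open>lam > 0\<close>] by (simp add: b_def)
  have "q = 1 / b"
    using stretch_factor_stretch_angle[of "sqrt lam" \<phi>] \<open>lam > 0\<close> by (simp add: q_def \<psi>_def b_def)
  moreover have "cos \<psi> = cos \<phi> / sqrt b"
    using cos_sin_stretch_angle(1)[of "sqrt lam" \<phi>] \<open>lam > 0\<close> by (simp add: \<psi>_def b_def)
  ultimately have cos_\<phi>: "cos \<phi> = cos \<psi> / sqrt q"
    using \<open>b > 0\<close> by (simp add: real_sqrt_divide)
  have "S - \<gamma> * cos \<psi> > 0"
    using CIPC_denom_pos[of "cos \<psi>" \<gamma>] by (simp add: S_def)
  moreover have "S - \<gamma> * cos \<phi> > 0"
    using CIPC_denom_pos[of "cos \<phi>" \<gamma>] by (simp add: S_def)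
  moreover have "f_GCPC 0 \<gamma> lam \<phi> / f_CIPC 0 \<gamma> \<phi> = (q * (S - \<gamma> * cos \<phi>)) / (sqrt lam * (S - \<gamma> * cos \<psi>))"
    using f_GCPC_pushforward[OF \<open>lam > 0\<close>, of \<gamma> \<phi>] \<open>q = 1 / b\<close>
    by (simp add: f_CIPC_def \<psi>_def b_def S_def)
  ultimately have "ln (f_GCPC 0 \<gamma> lam \<phi> / f_CIPC 0 \<gamma> \<phi>)
      = - ln lam / 2 + ln q - ln (S - \<gamma> * cos \<psi>) + ln (S - \<gamma> * cos \<phi>)"
    using \<open>q > 0\<close> \<open>lam > 0\<close> by (simp add: ln_div ln_mult ln_sqrt)
  also have "\<dots> = GCPC_log_ratio lam \<gamma> \<psi>"
    unfolding GCPC_log_ratio_def q_def[symmetric] S_def[symmetric] cos_\<phi> by simp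
  finally show ?thesis
    by (simp add: \<psi>_def)
qed

lemma continuous_on_GCPC_log_ratio:
  assumes "lam > 0"
  shows "continuous_on UNIV (GCPC_log_ratio lam \<gamma>)"
  unfolding GCPC_log_ratio_def[abs_def]
proof (rule continuous_on_add[OF _ continuous_on_ln_stretched_CIPC_denom[OF assms]], intro continuous_intros ballI)
  show "1 + (lam - 1) * (sin \<psi>)\<^sup>2 \<noteq> 0" for \<psi>
    using stretch_factor_pos[OF assms, of \<psi>] by simp
  show "sqrt (\<gamma>\<^sup>2 + 1) - \<gamma> * cos \<psi> \<noteq> 0" for \<psi>
    using CIPC_denom_pos[of "cos \<psi>" \<gamma>] by simp
qed

lemma has_integral_GCPC_KL_pullback:
  fixes lam \<gamma> :: real
  assumes "lam > 0"
  shows "((\<lambda>\<phi>. f_GCPC 0 \<gamma> lam \<phi> * ln (f_GCPC 0 \<gamma> lam \<phi> / f_CIPC 0 \<gamma> \<phi>))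
           has_integral integral {-pi..pi} (\<lambda>\<psi>. f_CIPC 0 \<gamma> \<psi> * GCPC_log_ratio lam \<gamma> \<psi>)) {-pi..pi}"
proof -
  have "continuous_on {-pi..pi} (\<lambda>\<psi>. f_CIPC 0 \<gamma> \<psi> * GCPC_log_ratio lam \<gamma> \<psi>)"
    using continuous_on_f_CIPC continuous_on_GCPC_log_ratio[OF assms]
    by (intro continuous_intros continuous_on_subset[where t="{-pi..pi}"]) auto
  from has_integral_stretch_angle_substitution[of "sqrt lam", OF _ this] assms
  show ?thesis
    unfolding ln_GCPC_CIPC_ratio[OF assms] unfolding f_GCPC_pushforward[OF assms] by (simp add: mult_ac)
qed

lemma wrapped_Cauchy_expectation_GCPC_log_ratio:
  fixes lam \<gamma> :: real
  assumes "lam > 0"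
  defines "\<delta> \<equiv> delta_of \<gamma>"
  shows "((\<lambda>\<psi>. f_WC \<delta> \<psi> * GCPC_log_ratio lam \<gamma> \<psi>) has_integral
           - ln lam / 2 + 2 * ln ((sqrt lam * (1 - \<delta>\<^sup>2) + 1 + \<delta>\<^sup>2) / 2) - ln (1 - \<delta>\<^sup>2)
           + integral {-pi..pi} (\<lambda>\<psi>. f_WC \<delta> \<psi> *
               ln (sqrt (\<gamma>\<^sup>2 + 1) - \<gamma> * cos \<psi> / sqrt (1 + (lam - 1) * (sin \<psi>)\<^sup>2)))) {-pi..pi}"
proof -
  have "\<bar>\<delta>\<bar> < 1"
    by (simp add: \<delta>_def abs_delta_of_less_one)
  have "(\<lambda>\<psi>. f_WC \<delta> \<psi> * ln (sqrt (\<gamma>\<^sup>2 + 1) - \<gamma> * cos \<psi> / sqrt (1 + (lam - 1) * (sin \<psi>)\<^sup>2)))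
      integrable_on {-pi..pi}"
    by (intro integrable_continuous_real continuous_on_subset[OF continuous_on_mult[OF
          continuous_on_f_WC[OF \<open>\<bar>\<delta>\<bar> < 1\<close>] continuous_on_ln_stretched_CIPC_denom[OF assms(1)]]])
      simp
  then have "((\<lambda>\<psi>. f_WC \<delta> \<psi> * (- ln lam / 2) + f_WC \<delta> \<psi> * ln (1 + (lam - 1) * (sin \<psi>)\<^sup>2)
        - f_WC \<delta> \<psi> * ln (sqrt (\<gamma>\<^sup>2 + 1) - \<gamma> * cos \<psi>)
        + f_WC \<delta> \<psi> * ln (sqrt (\<gamma>\<^sup>2 + 1) - \<gamma> * cos \<psi> / sqrt (1 + (lam - 1) * (sin \<psi>)\<^sup>2)))
      has_integral 1 * (- ln lam / 2) + 2 * ln ((sqrt lam * (1 - \<delta>\<^sup>2) + 1 + \<delta>\<^sup>2) / 2) - ln (1 - \<delta>\<^sup>2)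
        + integral {-pi..pi} (\<lambda>\<psi>. f_WC \<delta> \<psi> *
            ln (sqrt (\<gamma>\<^sup>2 + 1) - \<gamma> * cos \<psi> / sqrt (1 + (lam - 1) * (sin \<psi>)\<^sup>2)))) {-pi..pi}"
    unfolding \<delta>_def
    by (intro has_integral_add has_integral_diff has_integral_mult_left wrapped_Cauchy_total_mass
        wrapped_Cauchy_expectation_ln_stretch_factor wrapped_Cauchy_expectation_ln_CIPC_denom
        integrable_integral abs_delta_of_less_one assms(1))
  then show ?thesis
    by (simp add: GCPC_log_ratio_def distrib_left right_diff_distrib)
qed

lemma has_integral_KL_GCPC_CIPC_centered:
  fixes lam \<gamma> :: real
  assumes "lam > 0"
  defines "\<delta> \<equiv> delta_of \<gamma>"
  shows "((\<lambda>\<phi>. f_GCPC 0 \<gamma> lam \<phi> * ln (f_GCPC 0 \<gamma> lam \<phi> / f_CIPC 0 \<gamma> \<phi>)) has_integral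
           - ln lam / 2 + 2 * ln ((sqrt lam * (1 - \<delta>\<^sup>2) + 1 + \<delta>\<^sup>2) / 2) - ln (1 - \<delta>\<^sup>2)
           + integral {-pi..pi} (\<lambda>\<psi>. f_WC \<delta> \<psi> *
               ln (sqrt (\<gamma>\<^sup>2 + 1) - \<gamma> * cos \<psi> / sqrt (1 + (lam - 1) * (sin \<psi>)\<^sup>2)))) {-pi..pi}"
proof -
  have "(\<lambda>\<psi>. f_CIPC 0 \<gamma> \<psi> * GCPC_log_ratio lam \<gamma> \<psi>) = (\<lambda>\<psi>. f_WC \<delta> \<psi> * GCPC_log_ratio lam \<gamma> \<psi>)"
    by (simp add: \<delta>_def f_CIPC_eq_f_WC)
  then show ?thesis
    using has_integral_GCPC_KL_pullback[OF assms(1), of \<gamma>]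
      wrapped_Cauchy_expectation_GCPC_log_ratio[OF assms(1), of \<gamma>]
    by (simp add: \<delta>_def integral_unique)
qed

theorem mainTheorem6:
  fixes lam \<gamma> \<omega> :: real
  assumes "lam > 0" and "\<gamma> \<ge> 0" and "-pi \<le> \<omega>" and "\<omega> \<le> pi"
  defines "\<delta> \<equiv> delta_of \<gamma>"
  shows "((\<lambda>\<theta>. f_GCPC \<omega> \<gamma> lam \<theta> * ln (f_GCPC \<omega> \<gamma> lam \<theta> / f_CIPC \<omega> \<gamma> \<theta>))
           has_integral
           (- ln lam / 2
            + 2 * ln ((sqrt lam * (1 - \<delta>\<^sup>2) + 1 + \<delta>\<^sup>2) / 2)
            - ln (1 - \<delta>\<^sup>2)
            + integral {-pi<..pi} (\<lambda>\<psi>. f_WC \<delta> \<psi> *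
                 ln (sqrt (\<gamma>\<^sup>2 + 1) - \<gamma> * cos \<psi> / sqrt (1 + (lam - 1) * (sin \<psi>)\<^sup>2)))))
         {-pi..pi}"
proof -
  define K where "K = (\<lambda>\<phi>. f_GCPC 0 \<gamma> lam \<phi> * ln (f_GCPC 0 \<gamma> lam \<phi> / f_CIPC 0 \<gamma> \<phi>))"
  define E where "E = (\<lambda>\<psi>. f_WC \<delta> \<psi> * ln (sqrt (\<gamma>\<^sup>2 + 1) - \<gamma> * cos \<psi> / sqrt (1 + (lam - 1) * (sin \<psi>)\<^sup>2)))"
  have "integral {-pi<..pi} E = integral {-pi..pi} E"
    by (rule integral_subset_negligible) (auto intro: negligible_subset[of _ "{-pi}"])
  with has_integral_KL_GCPC_CIPC_centered[OF \<open>lam > 0\<close>, of \<gamma>]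
  have "(K has_integral
      - ln lam / 2 + 2 * ln ((sqrt lam * (1 - \<delta>\<^sup>2) + 1 + \<delta>\<^sup>2) / 2) - ln (1 - \<delta>\<^sup>2) + integral {-pi<..pi} E)
      {-pi..pi}" (is "(K has_integral ?I) _")
    by (simp add: K_def E_def \<delta>_def)
  moreover have "continuous_on UNIV K"
    unfolding K_def
  proof (intro continuous_intros continuous_on_f_GCPC continuous_on_f_CIPC \<open>lam > 0\<close> ballI)
    show "f_CIPC 0 \<gamma> \<phi> \<noteq> 0" "f_GCPC 0 \<gamma> lam \<phi> / f_CIPC 0 \<gamma> \<phi> \<noteq> 0" for \<phi>
      using f_GCPC_pos[OF \<open>lam > 0\<close>, of 0 \<gamma> \<phi>] f_CIPC_pos[of 0 \<gamma> \<phi>] by simp_all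
  qed
  moreover have "K (\<phi> + 2 * pi) = K \<phi>" for \<phi>
    by (simp add: K_def f_GCPC_def f_CIPC_def)
  ultimately have "((\<lambda>\<theta>. K (\<theta> - \<omega>)) has_integral ?I) {-pi..-pi + 2 * pi}"
    by (intro has_integral_periodic_translate) (use assms(3,4) in auto)
  then show ?thesis
    by (simp add: K_def E_def f_GCPC_shift[of \<omega>] f_CIPC_def)
qed

end
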